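(* Let $G$ be a weakly-reversible chemical reaction network in $s$ species, let $\mathbf{k}$ be a field of characteristic zero, and let $(\mathcal{E}_G)\subseteq \mathbf{k}[x_1,\dots,x_s]$ be the ideal generated by its associated event-system. Let $M$ and $N$ be distinct monic monomials in $x_1,\dots,x_s$. Then $M-N\in(\mathcal{E}_G)$ if and only if $M$ and $N$ are path-connected in the event-graph $\overline{G}$.
   Context: A chemical reaction network (CRN) consists of positive integers $s$ (species) and $n$ (complexes), a finite directed graph $G$ with vertex set $\{1,\dots,n\}$ and edge set $E(G)\subseteq\{1,\dots,n\}^2$, and an injective labeling of vertex $i$ by a monic monomial $\psi_i=\prod_{j=1}^s x_j^{y_{ij}}$ with $y_{ij}\in\mathbb{Z}_{\ge 0}$. $G$ is weakly-reversible iff each connected component of $G$ is strongly connected. The associated event-system $\mathcal{E}_G$ is the set of binomials $\psi_i-\psi_j$, one for each pair $\{i,j\}$ with $(i,j)\in E(G)$ or $(j,i)\in E(G)$ (the sign being fixed by some total order on monomials; it is irrelevant for the generated ideal). The event-graph $\overline{G}$ is the directed graph whose vertex set is the set of all monic monomials in $x_1,\dots,x_s$ (including $1$), with an edge $(N\psi_i, N\psi_j)$ for every $(i,j)\in E(G)$ and every monic monomial $N$. *)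

theory Defs
  imports "HOL-Library.Poly_Mapping"
begin

text \<open>Monic monomials in x_1..x_s are exponent vectors nat =>0 nat supported in {1..s};
  polynomials in k[x_1..x_s] are finitely supported maps from such monomials to k
  (multiplication = convolution, from HOL-Library.Poly_Mapping).\<close>

definition monomials :: "nat \<Rightarrow> (nat \<Rightarrow>\<^sub>0 nat) set" where
  "monomials s = {m. Poly_Mapping.keys m \<subseteq> {1..s}}"

definition polys :: "nat \<Rightarrow> ((nat \<Rightarrow>\<^sub>0 nat) \<Rightarrow>\<^sub>0 'k::comm_ring_1) set" where
  "polys s = {p. Poly_Mapping.keys p \<subseteq> monomials s}"

definition mon :: "(nat \<Rightarrow>\<^sub>0 nat) \<Rightarrow> ((nat \<Rightarrow>\<^sub>0 nat) \<Rightarrow>\<^sub>0 'k::comm_ring_1)" where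
  "mon m = Poly_Mapping.single m 1"

definition gen_ideal :: "nat \<Rightarrow> ((nat \<Rightarrow>\<^sub>0 nat) \<Rightarrow>\<^sub>0 'k::comm_ring_1) set
    \<Rightarrow> ((nat \<Rightarrow>\<^sub>0 nat) \<Rightarrow>\<^sub>0 'k) set" where
  "gen_ideal s B = {p. \<exists>F c. finite F \<and> F \<subseteq> B \<and> (\<forall>f\<in>F. c f \<in> polys s)
                          \<and> p = (\<Sum>f\<in>F. c f * f)}"

definition weakly_reversible :: "(nat \<times> nat) set \<Rightarrow> bool" where
  "weakly_reversible E \<longleftrightarrow> (\<forall>i j. (i, j) \<in> (E \<union> E\<inverse>)\<^sup>* \<longrightarrow> (i, j) \<in> E\<^sup>*)"

definition event_system ::
    "(nat \<Rightarrow> (nat \<Rightarrow>\<^sub>0 nat)) \<Rightarrow> (nat \<times> nat) set \<Rightarrow> ((nat \<Rightarrow>\<^sub>0 nat) \<Rightarrow>\<^sub>0 'k::comm_ring_1) set" where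
  "event_system y E = {mon (y i) - mon (y j) | i j. (i, j) \<in> E}"

definition event_graph ::
    "nat \<Rightarrow> (nat \<Rightarrow> (nat \<Rightarrow>\<^sub>0 nat)) \<Rightarrow> (nat \<times> nat) set \<Rightarrow> ((nat \<Rightarrow>\<^sub>0 nat) \<times> (nat \<Rightarrow>\<^sub>0 nat)) set" where
  "event_graph s y E = {(N + y i, N + y j) | N i j. N \<in> monomials s \<and> (i, j) \<in> E}"

end

theory Submission
  imports Defs
begin

text \<open>If \<open>M\<close> and \<open>N\<close> are joined by a path in the event graph, \<open>M - N\<close> telescopes into a sum of
  the differences along the edges, each of which is a monomial multiple of a generator.
  Conversely, let \<open>C\<close> be the connected component of \<open>M\<close> and consider the linear functional
  that sums the coefficients of a polynomial over the monomials in \<open>C\<close>. It kills every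
  product \<open>c \<cdot> (\<psi>\<^sub>i - \<psi>\<^sub>j)\<close>, because \<open>u \<psi>\<^sub>i\<close> and \<open>u \<psi>\<^sub>j\<close> are adjacent, hence it kills the ideal;
  but it takes the value \<open>1\<close> on \<open>M - N\<close> unless \<open>N \<in> C\<close>.\<close>

definition coeff_sum_on :: "'a set \<Rightarrow> ('a \<Rightarrow>\<^sub>0 'b::comm_monoid_add) \<Rightarrow> 'b" where
  "coeff_sum_on C p = (\<Sum>m\<in>Poly_Mapping.keys p \<inter> C. Poly_Mapping.lookup p m)"

lemma coeff_sum_on_superset:
  assumes "finite S" "Poly_Mapping.keys p \<subseteq> S"
  shows "coeff_sum_on C p = (\<Sum>m\<in>S \<inter> C. Poly_Mapping.lookup p m)"
  unfolding coeff_sum_on_def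
  by (rule sum.mono_neutral_left) (use assms in \<open>auto simp: in_keys_iff\<close>)

lemma coeff_sum_on_zero [simp]: "coeff_sum_on C 0 = 0"
  by (simp add: coeff_sum_on_def)

lemma coeff_sum_on_add: "coeff_sum_on C (p + q) = coeff_sum_on C p + coeff_sum_on C q"
proof -
  let ?S = "Poly_Mapping.keys p \<union> Poly_Mapping.keys q"
  have "coeff_sum_on C (p + q) = (\<Sum>m\<in>?S \<inter> C. Poly_Mapping.lookup (p + q) m)"
    by (rule coeff_sum_on_superset) (auto simp: keys_add)
  also have "\<dots> = (\<Sum>m\<in>?S \<inter> C. Poly_Mapping.lookup p m) + (\<Sum>m\<in>?S \<inter> C. Poly_Mapping.lookup q m)"
    by (simp add: lookup_add sum.distrib)
  also have "\<dots> = coeff_sum_on C p + coeff_sum_on C q"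
    by (subst (1 2) coeff_sum_on_superset[of ?S]) auto
  finally show ?thesis .
qed

lemma coeff_sum_on_diff:
  fixes p q :: "'a \<Rightarrow>\<^sub>0 'b::ab_group_add"
  shows "coeff_sum_on C (p - q) = coeff_sum_on C p - coeff_sum_on C q"
  by (metis coeff_sum_on_add diff_add_cancel eq_diff_eq)

lemma coeff_sum_on_sum: "coeff_sum_on C (sum g F) = (\<Sum>f\<in>F. coeff_sum_on C (g f))"
  by (induction F rule: infinite_finite_induct) (auto simp: coeff_sum_on_add)

lemma coeff_sum_on_single:
  "coeff_sum_on C (Poly_Mapping.single m a) = (if m \<in> C then a else 0)"
  by (simp add: coeff_sum_on_def)

lemma poly_mapping_sum_single:
  "c = (\<Sum>u\<in>Poly_Mapping.keys c. Poly_Mapping.single u (Poly_Mapping.lookup c u))"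
proof (rule poly_mapping_eqI)
  fix m
  have "(\<Sum>u\<in>Poly_Mapping.keys c.
          Poly_Mapping.lookup (Poly_Mapping.single u (Poly_Mapping.lookup c u)) m)
      = (\<Sum>u\<in>Poly_Mapping.keys c. if u = m then Poly_Mapping.lookup c m else 0)"
    by (rule sum.cong) (auto simp: lookup_single when_def)
  also have "\<dots> = Poly_Mapping.lookup c m"
    by (auto simp: in_keys_iff)
  finally show "Poly_Mapping.lookup c m = Poly_Mapping.lookup
      (\<Sum>u\<in>Poly_Mapping.keys c. Poly_Mapping.single u (Poly_Mapping.lookup c u)) m"
    by (simp add: lookup_sum)
qed

lemma coeff_sum_on_mult_binomial_eq_0:
  fixes c :: "'a::monoid_add \<Rightarrow>\<^sub>0 'b::ring_1"
  assumes "\<And>u. u \<in> Poly_Mapping.keys c \<Longrightarrow> u + a \<in> C \<longleftrightarrow> u + b \<in> C"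
  shows "coeff_sum_on C (c * (Poly_Mapping.single a 1 - Poly_Mapping.single b 1)) = 0"
proof -
  have "c * (Poly_Mapping.single a 1 - Poly_Mapping.single b 1)
      = (\<Sum>u\<in>Poly_Mapping.keys c. Poly_Mapping.single (u + a) (Poly_Mapping.lookup c u)
                                  - Poly_Mapping.single (u + b) (Poly_Mapping.lookup c u))"
    by (subst poly_mapping_sum_single)
       (simp add: sum_distrib_right right_diff_distrib mult_single sum_subtractf)
  then show ?thesis
    using assms by (simp add: coeff_sum_on_sum coeff_sum_on_diff coeff_sum_on_single)
qed

lemma zero_mem_polys: "0 \<in> polys s"
  by (simp add: polys_def)

lemma add_mem_polys: "p \<in> polys s \<Longrightarrow> q \<in> polys s \<Longrightarrow> p + q \<in> polys s"
  using keys_add[of p q] unfolding polys_def by blast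

lemma zero_mem_gen_ideal: "0 \<in> gen_ideal s B"
  unfolding gen_ideal_def by (intro CollectI exI[of _ "{}"]) auto

lemma mult_generator_mem_gen_ideal:
  assumes "g \<in> B" "c \<in> polys s"
  shows "c * g \<in> gen_ideal s B"
  unfolding gen_ideal_def using assms by (intro CollectI exI[of _ "{g}"] exI[of _ "\<lambda>_. c"]) simp

lemma add_mem_gen_ideal:
  assumes "p \<in> gen_ideal s B" "q \<in> gen_ideal s B"
  shows "p + q \<in> gen_ideal s B"
proof -
  obtain F1 c1 where F1: "finite F1" "F1 \<subseteq> B" "\<forall>f\<in>F1. c1 f \<in> polys s"
    and p: "p = (\<Sum>f\<in>F1. c1 f * f)"
    using assms(1) unfolding gen_ideal_def by blast
  obtain F2 c2 where F2: "finite F2" "F2 \<subseteq> B" "\<forall>f\<in>F2. c2 f \<in> polys s"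
    and q: "q = (\<Sum>f\<in>F2. c2 f * f)"
    using assms(2) unfolding gen_ideal_def by blast
  define d1 where "d1 f = (if f \<in> F1 then c1 f else 0)" for f
  define d2 where "d2 f = (if f \<in> F2 then c2 f else 0)" for f
  have "p = (\<Sum>f\<in>F1 \<union> F2. d1 f * f)"
    unfolding p by (rule sum.mono_neutral_cong_left) (simp_all add: F1(1) F2(1) d1_def)
  moreover have "q = (\<Sum>f\<in>F1 \<union> F2. d2 f * f)"
    unfolding q by (rule sum.mono_neutral_cong_left) (simp_all add: F1(1) F2(1) d2_def)
  ultimately have "p + q = (\<Sum>f\<in>F1 \<union> F2. (d1 f + d2 f) * f)"
    by (simp add: sum.distrib distrib_right)
  moreover have "d1 f + d2 f \<in> polys s" for f
    using F1(3) F2(3) by (simp add: d1_def d2_def zero_mem_polys add_mem_polys)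
  ultimately show ?thesis
    unfolding gen_ideal_def using F1(1,2) F2(1,2)
    by (intro CollectI exI[of _ "F1 \<union> F2"] exI[of _ "\<lambda>f. d1 f + d2 f"]) auto
qed

lemma coeff_sum_on_gen_ideal_event_system_eq_0:
  fixes p :: "(nat \<Rightarrow>\<^sub>0 nat) \<Rightarrow>\<^sub>0 'k::comm_ring_1"
  assumes "p \<in> gen_ideal s (event_system y E)"
    and "\<And>u i j. u \<in> monomials s \<Longrightarrow> (i, j) \<in> E \<Longrightarrow> u + y i \<in> C \<longleftrightarrow> u + y j \<in> C"
  shows "coeff_sum_on C p = 0"
proof -
  obtain F c where F: "finite F" "F \<subseteq> event_system y E" "\<forall>f\<in>F. c f \<in> polys s"
    and p: "p = (\<Sum>f\<in>F. c f * f)"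
    using assms(1) unfolding gen_ideal_def by blast
  have "coeff_sum_on C (c f * f) = 0" if "f \<in> F" for f
  proof -
    obtain i j where f: "f = mon (y i) - mon (y j)" and ij: "(i, j) \<in> E"
      using F(2) \<open>f \<in> F\<close> unfolding event_system_def by blast
    have "Poly_Mapping.keys (c f) \<subseteq> monomials s"
      using F(3) \<open>f \<in> F\<close> unfolding polys_def by blast
    then show ?thesis
      unfolding f mon_def
      by (intro coeff_sum_on_mult_binomial_eq_0) (use assms(2)[OF _ ij] in blast)
  qed
  then show ?thesis
    unfolding p coeff_sum_on_sum by simp
qed

lemma event_graph_component_shift_closed:
  fixes y :: "nat \<Rightarrow> (nat \<Rightarrow>\<^sub>0 nat)"
  assumes "u \<in> monomials s" "(i, j) \<in> E"
  defines "R \<equiv> event_graph s y E \<union> (event_graph s y E)\<inverse>"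
  shows "u + y i \<in> R\<^sup>* `` {M} \<longleftrightarrow> u + y j \<in> R\<^sup>* `` {M}"
proof -
  have "(u + y i, u + y j) \<in> event_graph s y E"
    unfolding event_graph_def using assms(1,2) by blast
  then have "(u + y i, u + y j) \<in> R" "(u + y j, u + y i) \<in> R"
    unfolding R_def by auto
  then show ?thesis
    by (meson Image_singleton_iff rtrancl.rtrancl_into_rtrancl)
qed

lemma mon_diff_mem_gen_ideal_if_connected:
  assumes "(M, N) \<in> (event_graph s y E \<union> (event_graph s y E)\<inverse>)\<^sup>*"
  shows "(mon M - mon N :: (nat \<Rightarrow>\<^sub>0 nat) \<Rightarrow>\<^sub>0 'k::comm_ring_1) \<in> gen_ideal s (event_system y E)"
  using assms
proof (induction rule: rtrancl_induct)
  case base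
  show ?case using zero_mem_gen_ideal by simp
next
  case (step P Q)
  obtain u i j where u: "u \<in> monomials s" and ij: "(i, j) \<in> E"
    and PQ: "(P, Q) = (u + y i, u + y j) \<or> (P, Q) = (u + y j, u + y i)"
    using step.hyps(2) unfolding event_graph_def by auto
  have gen: "(mon (y i) - mon (y j) :: (nat \<Rightarrow>\<^sub>0 nat) \<Rightarrow>\<^sub>0 'k) \<in> event_system y E"
    using ij unfolding event_system_def by blast
  have "(mon u :: (nat \<Rightarrow>\<^sub>0 nat) \<Rightarrow>\<^sub>0 'k) \<in> polys s" "(- mon u :: (nat \<Rightarrow>\<^sub>0 nat) \<Rightarrow>\<^sub>0 'k) \<in> polys s"
    using u by (auto simp: polys_def mon_def)
  moreover have "(mon P - mon Q :: (nat \<Rightarrow>\<^sub>0 nat) \<Rightarrow>\<^sub>0 'k)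
      = (if (P, Q) = (u + y i, u + y j) then mon u else - mon u) * (mon (y i) - mon (y j))"
    using PQ by (auto simp: mon_def mult_single algebra_simps)
  ultimately have "(mon P - mon Q :: (nat \<Rightarrow>\<^sub>0 nat) \<Rightarrow>\<^sub>0 'k) \<in> gen_ideal s (event_system y E)"
    using mult_generator_mem_gen_ideal[OF gen] by simp
  from add_mem_gen_ideal[OF step.IH this] show ?case
    by simp
qed

lemma connected_if_mon_diff_mem_gen_ideal:
  assumes "(mon M - mon N :: (nat \<Rightarrow>\<^sub>0 nat) \<Rightarrow>\<^sub>0 'k::comm_ring_1) \<in> gen_ideal s (event_system y E)"
  shows "(M, N) \<in> (event_graph s y E \<union> (event_graph s y E)\<inverse>)\<^sup>*"
proof -
  let ?C = "(event_graph s y E \<union> (event_graph s y E)\<inverse>)\<^sup>* `` {M}"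
  have "coeff_sum_on ?C (mon M - mon N :: (nat \<Rightarrow>\<^sub>0 nat) \<Rightarrow>\<^sub>0 'k) = 0"
    using assms event_graph_component_shift_closed
    by (rule coeff_sum_on_gen_ideal_event_system_eq_0)
  then have "N \<in> ?C"
    by (simp add: coeff_sum_on_diff coeff_sum_on_single mon_def split: if_splits)
  then show ?thesis
    by simp
qed

theorem lemma3p1:
  fixes s n :: nat
    and E :: "(nat \<times> nat) set"
    and y :: "nat \<Rightarrow> (nat \<Rightarrow>\<^sub>0 nat)"
    and M N :: "nat \<Rightarrow>\<^sub>0 nat"
  assumes "0 < s" and "0 < n"
    and "E \<subseteq> {1..n} \<times> {1..n}"
    and "inj_on y {1..n}"
    and "\<forall>i\<in>{1..n}. y i \<in> monomials s"
    and "weakly_reversible E"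
    and "M \<in> monomials s" and "N \<in> monomials s" and "M \<noteq> N"
  shows "(mon M - mon N :: (nat \<Rightarrow>\<^sub>0 nat) \<Rightarrow>\<^sub>0 'k::field_char_0)
            \<in> gen_ideal s (event_system y E)
         \<longleftrightarrow> (M, N) \<in> (event_graph s y E \<union> (event_graph s y E)\<inverse>)\<^sup>*"
  using connected_if_mon_diff_mem_gen_ideal mon_diff_mem_gen_ideal_if_connected by blast

end
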